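(* Fix $n\in\mathbb Z_{\ge2}$ and $k\in\mathbb Z_{\ge1}$. Let $\sigma\in\mathrm{Av}(\searrow_n)$ with $|\sigma|\ge k$ be such that $\mathbb C(\sigma)$ is a rainbow $(n-1)$-colouring, i.e. its image is exactly $[n-1]$, and let $(\pi,\mathfrak c)=\mathrm{en}_k(\mathbb S(\sigma))$, an edge of $\mathcal{O}v_c(k,\searrow_n)$. Let $(\pi',\mathfrak c')$ be an edge of $\mathcal{O}v_c(k,\searrow_n)$ whose start vertex equals the arrival vertex of $(\pi,\mathfrak c)$, i.e. $\mathrm{be}_{k-1}(\pi',\mathfrak c')=\mathrm{en}_{k-1}(\pi,\mathfrak c)$. Then there exists $\iota\in[|\sigma|+1]$ such that $\mathrm{en}_k(\mathbb S(\sigma^{*\iota}))=(\pi',\mathfrak c')$.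
   Context: $\searrow_n=n(n-1)\cdots1$. For $I=\{i_1<\dots<i_j\}$, $\mathrm{pat}_I(\sigma)$ is the unique permutation with entries in the same relative order as $\sigma(i_1),\dots,\sigma(i_j)$; $\mathrm{Av}_m(\searrow_n)$ is the set of size-$m$ permutations with no $I$ such that $\mathrm{pat}_I(\sigma)=\searrow_n$, $\mathrm{Av}(\searrow_n)$ their union over $m\ge1$. For $\sigma\in\mathcal S_m$ and $\iota\in[m+1]$, $\sigma^{*\iota}$ is the permutation of $[m+1]$ with entries in the same relative order as $\sigma(1),\dots,\sigma(m),\iota-1/2$. A colouring of $\sigma\in\mathcal S_m$ is a map $\mathfrak c:[m]\to\mathbb Z_{\ge1}$; restriction $\mathrm{pat}_I(\sigma,\mathfrak c)=(\mathrm{pat}_I(\sigma),\mathfrak c')$ with $\mathfrak c'(\ell)=\mathfrak c(i_\ell)$; $\mathrm{be}_j=\mathrm{pat}_{\{1,\dots,j\}}$, $\mathrm{en}_j=\mathrm{pat}_{\{m-j+1,\dots,m\}}$. The RITMO colouring $\mathbb C(\sigma)$ processes indices in decreasing order of value, giving index $i$ the smallest positive integer $c$ such that no already coloured index $j<i$ has colour $c$ (equivalently: colour 1 on left-to-right maxima, colour 2 on left-to-right maxima of the remaining entries, etc.); $\mathbb S(\sigma)=(\sigma,\mathbb C(\sigma))$. A coloured permutation $(\pi,\mathfrak c)$ with $\pi\in\mathrm{Av}_k(\searrow_n)$ is inherited if there is $\sigma\in\mathrm{Av}(\searrow_n)$ with $|\sigma|\ge k$ and $\mathrm{en}_k(\mathbb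 S(\sigma))=(\pi,\mathfrak c)$; $\mathcal C_{n-1}(k)$ is the set of these. The coloured overlap graph $\mathcal{O}v_c(k,\searrow_n)$ has vertex set $\mathcal C_{n-1}(k-1)$, edge set $\mathcal C_{n-1}(k)$, the edge $(\pi,\mathfrak c)$ going from $\mathrm{be}_{k-1}(\pi,\mathfrak c)$ to $\mathrm{en}_{k-1}(\pi,\mathfrak c)$. *)

theory Defs
  imports Main "HOL.Real"
begin

text \<open>Permutations of [m] are lists of length m containing each of 1..m once.
  Positions are 0-based in lists; values are 1-based as in the paper.\<close>

definition is_perm :: "nat list \<Rightarrow> bool" where
  "is_perm \<sigma> \<longleftrightarrow> distinct \<sigma> \<and> set \<sigma> = {1..length \<sigma>}"

definition std :: "'a::linorder list \<Rightarrow> nat list" where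
  "std xs = map (\<lambda>x. card {y \<in> set xs. y \<le> x}) xs"

text \<open>pat_I(sigma), with I a set of 0-based positions.\<close>
definition pat :: "nat set \<Rightarrow> nat list \<Rightarrow> nat list" where
  "pat I \<sigma> = std (nths \<sigma> I)"

definition decr :: "nat \<Rightarrow> nat list" where
  "decr n = rev [1..<n+1]"

definition contains_decr :: "nat \<Rightarrow> nat list \<Rightarrow> bool" where
  "contains_decr n \<sigma> \<longleftrightarrow> (\<exists>I. I \<subseteq> {0..<length \<sigma>} \<and> pat I \<sigma> = decr n)"

definition Av_m :: "nat \<Rightarrow> nat \<Rightarrow> nat list set" where
  "Av_m m n = {\<sigma>. is_perm \<sigma> \<and> length \<sigma> = m \<and> \<not> contains_decr n \<sigma>}"

definition Av :: "nat \<Rightarrow> nat list set" where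
  "Av n = (\<Union>m\<in>{1..}. Av_m m n)"

definition star :: "nat list \<Rightarrow> nat \<Rightarrow> nat list" where
  "star \<sigma> \<iota> = std (map real \<sigma> @ [real \<iota> - 1/2])"

text \<open>Coloured permutations: a permutation with a colour list of the same length.\<close>
type_synonym cperm = "nat list \<times> nat list"

definition pat_c :: "nat set \<Rightarrow> cperm \<Rightarrow> cperm" where
  "pat_c I sc = (std (nths (fst sc) I), nths (snd sc) I)"

definition be :: "nat \<Rightarrow> cperm \<Rightarrow> cperm" where
  "be j sc = pat_c {0..<j} sc"

definition en :: "nat \<Rightarrow> cperm \<Rightarrow> cperm" where
  "en j sc = pat_c {length (fst sc) - j..<length (fst sc)} sc"

text \<open>RITMO colouring: indices processed in decreasing order of value; index i gets the
  least colour c \<ge> 1 not used by an already coloured index j < i (0 = not yet coloured).\<close>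
definition ritmo_step :: "nat list \<Rightarrow> nat \<Rightarrow> nat list \<Rightarrow> nat list" where
  "ritmo_step \<sigma> v cs = (let i = (LEAST i. i < length \<sigma> \<and> \<sigma> ! i = v) in
      cs[i := (LEAST c. c \<ge> 1 \<and> (\<forall>j<i. cs ! j \<noteq> c))])"

definition ritmo :: "nat list \<Rightarrow> nat list" where
  "ritmo \<sigma> = fold (ritmo_step \<sigma>) (rev [1..<length \<sigma> + 1]) (replicate (length \<sigma>) 0)"

definition S :: "nat list \<Rightarrow> cperm" where
  "S \<sigma> = (\<sigma>, ritmo \<sigma>)"

definition inherited :: "nat \<Rightarrow> nat \<Rightarrow> cperm set" where
  "inherited n k = {(\<pi>, c). \<pi> \<in> Av_m k n \<and>
      (\<exists>\<sigma>\<in>Av n. length \<sigma> \<ge> k \<and> en k (S \<sigma>) = (\<pi>, c))}"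

definition ovc_vertices :: "nat \<Rightarrow> nat \<Rightarrow> cperm set" where
  "ovc_vertices k n = inherited n (k - 1)"

definition ovc_edges :: "nat \<Rightarrow> nat \<Rightarrow> cperm set" where
  "ovc_edges k n = inherited n k"

definition ovc_start :: "nat \<Rightarrow> cperm \<Rightarrow> cperm" where
  "ovc_start k e = be (k - 1) e"

definition ovc_arrival :: "nat \<Rightarrow> cperm \<Rightarrow> cperm" where
  "ovc_arrival k e = en (k - 1) e"

end

theory Submission
  imports Defs
begin

text \<open>The RITMO colouring is the greedy colouring that gives each entry the least colour not
  carried by an earlier larger entry, so an entry of colour c ends a decreasing subsequence of
  length c. Take a permutation \<open>\<tau>\<close> witnessing the edge \<open>(\<pi>', c')\<close>; the overlap condition says that
  the last \<open>k - 1\<close> entries of \<open>\<sigma>\<close> look, with colours, like the \<open>k - 1\<close> entries of \<open>\<tau>\<close> preceding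
  its last entry. The new value \<open>\<iota> - 1/2\<close> must lie above the window entries that \<open>\<tau>\<close> puts below its
  last entry and below the others, which confines \<open>\<iota>\<close> to an interval \<open>{Suc lo..hi}\<close>. Across this
  interval the colour of the new entry decreases in steps of at most one, so it hits the colour d of
  the last entry of \<open>\<tau>\<close> provided it is at most d at \<open>hi\<close> and at least d at \<open>Suc lo\<close>. The first bound
  follows from the colouring of \<open>\<tau>\<close>; for the second one needs an entry of colour \<open>d - 1\<close> above \<open>lo\<close>,
  and when the window gives none, the rainbow hypothesis supplies it, since \<open>d < n\<close> because \<open>\<tau>\<close>
  avoids the decreasing pattern of length n.\<close>

section \<open>The greedy colouring\<close>

lemma Least_unused_colour:
  fixes f :: "nat \<Rightarrow> nat" and Q :: "nat \<Rightarrow> bool" and p :: nat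
  defines "L \<equiv> (LEAST c. 1 \<le> c \<and> (\<forall>j<p. Q j \<longrightarrow> f j \<noteq> c))"
  shows "1 \<le> L" "\<And>j. j < p \<Longrightarrow> Q j \<Longrightarrow> f j \<noteq> L"
    "\<And>c. 1 \<le> c \<Longrightarrow> c < L \<Longrightarrow> \<exists>j<p. Q j \<and> f j = c"
    "\<And>c. 1 \<le> c \<Longrightarrow> (\<forall>j<p. Q j \<longrightarrow> f j \<noteq> c) \<Longrightarrow> L \<le> c"
proof -
  define c0 where "c0 = Suc (Max (insert 0 (f ` {..<p})))"
  have "\<forall>j<p. f j \<le> Max (insert 0 (f ` {..<p}))" by (intro allI impI Max_ge) auto
  hence "1 \<le> c0 \<and> (\<forall>j<p. Q j \<longrightarrow> f j \<noteq> c0)" unfolding c0_def by fastforce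
  hence L: "1 \<le> L \<and> (\<forall>j<p. Q j \<longrightarrow> f j \<noteq> L)" unfolding L_def by (rule LeastI)
  show "1 \<le> L" "\<And>j. j < p \<Longrightarrow> Q j \<Longrightarrow> f j \<noteq> L" using L by simp_all
  show "\<exists>j<p. Q j \<and> f j = c" if "1 \<le> c" "c < L" for c
    using not_less_Least[OF \<open>c < L\<close>[unfolded L_def]] that(1) by blast
  show "\<And>c. 1 \<le> c \<Longrightarrow> (\<forall>j<p. Q j \<longrightarrow> f j \<noteq> c) \<Longrightarrow> L \<le> c"
    unfolding L_def by (rule Least_le) simp
qed

definition new_colour :: "'a::linorder list \<Rightarrow> nat list \<Rightarrow> 'a \<Rightarrow> nat" where
  "new_colour xs cs x = (LEAST c. 1 \<le> c \<and> (\<forall>j<length xs. x < xs!j \<longrightarrow> cs!j \<noteq> c))"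

definition colours :: "'a::linorder list \<Rightarrow> nat list" where
  "colours xs =
     snd (foldl (\<lambda>(ys, cs) x. (ys @ [x], cs @ [new_colour ys cs x])) ([], []) xs)"

lemma colours_Nil [simp]: "colours [] = []"
  by (simp add: colours_def)

lemma colours_snoc: "colours (xs @ [x]) = colours xs @ [new_colour xs (colours xs) x]"
proof -
  let ?step = "\<lambda>(ys, cs) x. (ys @ [x], cs @ [new_colour ys cs x])"
  have "foldl ?step ([], []) xs = (xs, colours xs)"
    unfolding colours_def by (induction xs rule: rev_induct) (auto split: prod.split)
  have "colours (xs @ [x]) = snd (?step (foldl ?step ([], []) xs) x)"
    unfolding colours_def by simp
  with \<open>foldl ?step ([], []) xs = (xs, colours xs)\<close> show ?thesis by simp
qed

lemma length_colours [simp]: "length (colours xs) = length xs"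
  by (induction xs rule: rev_induct) (auto simp: colours_snoc)

lemma nth_colours:
  "p < length xs \<Longrightarrow>
     colours xs ! p = (LEAST c. 1 \<le> c \<and> (\<forall>j<p. xs!p < xs!j \<longrightarrow> colours xs!j \<noteq> c))"
proof (induction xs arbitrary: p rule: rev_induct)
  case (snoc x xs)
  have prefix: "(xs @ [x])!j = xs!j \<and> colours (xs @ [x])!j = colours xs!j" if "j < length xs" for j
    using that by (simp add: nth_append colours_snoc)
  show ?case
  proof (cases "p < length xs")
    case True
    with snoc.IH show ?thesis using prefix by (simp add: prefix cong: conj_cong)
  next
    case False
    with snoc.prems have "p = length xs" by simp
    thus ?thesis using prefix by (simp add: colours_snoc new_colour_def nth_append)
  qed
qed simp

lemma colours_props:
  assumes "p < length xs"
  shows "1 \<le> colours xs ! p"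
    "\<And>j. j < p \<Longrightarrow> xs!p < xs!j \<Longrightarrow> colours xs!j \<noteq> colours xs!p"
    "\<And>c. 1 \<le> c \<Longrightarrow> c < colours xs!p \<Longrightarrow> \<exists>j<p. xs!p < xs!j \<and> colours xs!j = c"
    "\<And>c. 1 \<le> c \<Longrightarrow> (\<forall>j<p. xs!p < xs!j \<longrightarrow> colours xs!j \<noteq> c) \<Longrightarrow> colours xs!p \<le> c"
  using Least_unused_colour[where p = p and Q = "\<lambda>j. xs!p < xs!j" and f = "\<lambda>j. colours xs!j"]
  unfolding nth_colours[OF assms] by auto

lemma new_colour_props:
  fixes xs :: "'a::linorder list" and x :: 'a
  defines "F \<equiv> new_colour xs (colours xs) x"
  shows "1 \<le> F"
    "\<And>j. j < length xs \<Longrightarrow> x < xs!j \<Longrightarrow> colours xs!j \<noteq> F"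
    "\<And>c. 1 \<le> c \<Longrightarrow> c < F \<Longrightarrow> \<exists>j<length xs. x < xs!j \<and> colours xs!j = c"
    "\<And>c. 1 \<le> c \<Longrightarrow> (\<forall>j<length xs. x < xs!j \<longrightarrow> colours xs!j \<noteq> c) \<Longrightarrow> F \<le> c"
  using Least_unused_colour[where p = "length xs" and Q = "\<lambda>j. x < xs!j" and f = "\<lambda>j. colours xs!j"]
  unfolding F_def new_colour_def by auto

lemma colours_less_colours:
  assumes "j < p" "p < length xs" "xs!p < xs!j"
  shows "colours xs!j < colours xs!p"
proof (rule ccontr)
  assume "\<not> ?thesis"
  moreover have "colours xs!j \<noteq> colours xs!p" using colours_props(2)[OF assms(2) assms(1,3)] .
  ultimately have "colours xs!p < colours xs!j" by simp
  with colours_props(1)[OF assms(2)] obtain j' where "j' < j" "xs!j < xs!j'" "colours xs!j' = colours xs!p"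
    using colours_props(3)[of j xs] assms by auto
  moreover from \<open>xs!j < xs!j'\<close> assms(3) have "xs!p < xs!j'" by order
  ultimately show False using colours_props(2)[OF assms(2), of j'] assms(1) by simp
qed

lemma colours_less_new_colour:
  assumes "j < length xs" "x < xs!j"
  shows "colours xs!j < new_colour xs (colours xs) x"
proof (rule ccontr)
  let ?F = "new_colour xs (colours xs) x"
  assume "\<not> ?thesis"
  moreover have "colours xs!j \<noteq> ?F" using new_colour_props(2)[OF assms] .
  ultimately have "?F < colours xs!j" by simp
  with new_colour_props(1) obtain j' where "j' < j" "xs!j < xs!j'" "colours xs!j' = ?F"
    using colours_props(3)[of j xs ?F] assms by auto
  moreover from \<open>xs!j < xs!j'\<close> assms(2) have "x < xs!j'" by order
  ultimately show False using new_colour_props(2)[of j' xs x] assms(1) by simp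
qed

lemma new_colour_le_Suc_new_colour:
  fixes xs :: "'a::linorder list"
  assumes passed: "\<forall>j<length xs. x < xs!j \<longrightarrow> j = p \<or> y < xs!j"
  shows "new_colour xs (colours xs) x \<le> new_colour xs (colours xs) y + 1"
proof (rule new_colour_props(4))
  let ?G = "new_colour xs (colours xs) y"
  show "\<forall>j<length xs. x < xs!j \<longrightarrow> colours xs!j \<noteq> ?G + 1"
  proof (intro allI impI)
    fix j assume j: "j < length xs" "x < xs!j"
    with passed consider "j = p" | "y < xs!j" by blast
    thus "colours xs!j \<noteq> ?G + 1"
    proof cases
      case 1
      have "colours xs!p \<le> ?G"
      proof (rule colours_props(4))
        show "\<forall>i<p. xs!p < xs!i \<longrightarrow> colours xs!i \<noteq> ?G"
        proof (intro allI impI)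
          fix i assume i: "i < p" "xs!p < xs!i"
          with j 1 have "x < xs!i" "i < length xs" by auto
          with passed i(1) have "y < xs!i" by blast
          with new_colour_props(2) \<open>i < length xs\<close> show "colours xs!i \<noteq> ?G" by blast
        qed
      qed (use j 1 new_colour_props(1) in auto)
      with 1 show ?thesis by simp
    next
      case 2
      with colours_less_new_colour[OF j(1)] show ?thesis by fastforce
    qed
  qed
qed simp

lemma is_permD:
  assumes "is_perm \<sigma>"
  shows "distinct \<sigma>" "\<And>i. i < length \<sigma> \<Longrightarrow> 1 \<le> \<sigma>!i \<and> \<sigma>!i \<le> length \<sigma>"
    "\<And>v. 1 \<le> v \<Longrightarrow> v \<le> length \<sigma> \<Longrightarrow> \<exists>i<length \<sigma>. \<sigma>!i = v"
  using assms nth_mem[of _ \<sigma>] by (auto simp: is_perm_def in_set_conv_nth simp del: nth_mem)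

text \<open>After the values m, ..., v have been processed, RITMO has given its final colour exactly to
  the positions holding a value \<open>\<ge> v\<close> and left all other positions at 0.\<close>

lemma ritmo_eq_colours:
  assumes "is_perm \<sigma>"
  shows "ritmo \<sigma> = colours \<sigma>"
proof -
  let ?m = "length \<sigma>"
  let ?st = "\<lambda>v. map (\<lambda>i. if v \<le> \<sigma>!i then colours \<sigma>!i else 0) [0..<?m]"
  note bnd = is_permD(2)[OF assms]
  have "fold (ritmo_step \<sigma>) (rev [v..<?m+1]) (replicate ?m 0) = ?st v" if "1 \<le> v" "v \<le> ?m+1" for v
    using that(2,1)
  proof (induction v rule: inc_induct)
    case base
    have "\<not> Suc ?m \<le> \<sigma>!i" if "i < ?m" for i using bnd[OF that] by simp
    thus ?case by (intro nth_equalityI) auto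
  next
    case (step v)
    obtain p where p: "p < ?m" "\<sigma>!p = v" using is_permD(3)[OF assms, of v] step.hyps step.prems by auto
    have uniq: "i = p" if "i < ?m" "\<sigma>!i = v" for i
      using is_permD(1)[OF assms] p that by (metis nth_eq_iff_index_eq)
    have index: "(LEAST i. i < ?m \<and> \<sigma>!i = v) = p"
      by (rule Least_equality) (use p uniq in \<open>blast, metis order_refl\<close>)
    have "(\<lambda>c. 1 \<le> c \<and> (\<forall>j<p. ?st (Suc v) ! j \<noteq> c)) =
          (\<lambda>c. 1 \<le> c \<and> (\<forall>j<p. \<sigma>!p < \<sigma>!j \<longrightarrow> colours \<sigma>!j \<noteq> c))"
      using p by (auto simp: fun_eq_iff)
    hence colour: "(LEAST c. 1 \<le> c \<and> (\<forall>j<p. ?st (Suc v) ! j \<noteq> c)) = colours \<sigma> ! p"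
      using nth_colours[OF p(1)] by simp
    have "[v..<?m+1] = v # [Suc v..<?m+1]" using step.hyps by (simp add: upt_rec)
    hence "fold (ritmo_step \<sigma>) (rev [v..<?m+1]) (replicate ?m 0) = ritmo_step \<sigma> v (?st (Suc v))"
      using step.IH step.prems by simp
    also have "\<dots> = (?st (Suc v))[p := colours \<sigma> ! p]"
      unfolding ritmo_step_def Let_def index colour ..
    also have "\<dots> = ?st v"
    proof (rule nth_equalityI)
      fix i assume "i < length ((?st (Suc v))[p := colours \<sigma> ! p])"
      hence i: "i < ?m" by simp
      show "(?st (Suc v))[p := colours \<sigma> ! p] ! i = ?st v ! i"
      proof (cases "i = p")
        case False
        hence "\<sigma>!i \<noteq> v" using uniq i by blast
        thus ?thesis using False i by auto
      qed (use p in simp)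
    qed simp
    finally show ?case .
  qed
  from this[of 1] have "ritmo \<sigma> = ?st 1" unfolding ritmo_def by simp
  also have "\<dots> = colours \<sigma>" using bnd by (intro nth_equalityI) auto
  finally show ?thesis .
qed

section \<open>Order patterns\<close>

definition order_iso :: "'a::linorder list \<Rightarrow> 'b::linorder list \<Rightarrow> bool" where
  "order_iso xs ys \<longleftrightarrow> length xs = length ys \<and>
     (\<forall>i<length xs. \<forall>j<length xs. xs!i \<le> xs!j \<longleftrightarrow> ys!i \<le> ys!j)"

lemma order_iso_sym: "order_iso xs ys \<Longrightarrow> order_iso ys xs"
  unfolding order_iso_def by (metis (full_types))

lemma order_iso_trans: "order_iso xs ys \<Longrightarrow> order_iso ys zs \<Longrightarrow> order_iso xs zs"
  unfolding order_iso_def by (metis (full_types))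

lemma order_iso_drop: "order_iso xs ys \<Longrightarrow> order_iso (drop l xs) (drop l ys)"
  unfolding order_iso_def by auto

lemma order_iso_take: "order_iso xs ys \<Longrightarrow> order_iso (take l xs) (take l ys)"
  unfolding order_iso_def by auto

lemma order_iso_map_real: "order_iso xs (map real xs)"
  unfolding order_iso_def by auto

lemma order_iso_less_iff:
  "order_iso xs ys \<Longrightarrow> i < length xs \<Longrightarrow> j < length xs \<Longrightarrow> xs!i < xs!j \<longleftrightarrow> ys!i < ys!j"
  unfolding order_iso_def by (meson not_le)

lemma order_iso_distinct:
  assumes "order_iso xs ys" "distinct xs"
  shows "distinct ys"
  unfolding distinct_conv_nth
proof (intro allI impI)
  fix i j assume ij: "i < length ys" "j < length ys" "i \<noteq> j"
  have "length xs = length ys" using assms(1) by (simp add: order_iso_def)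
  with assms ij have "xs!i \<noteq> xs!j" by (simp add: nth_eq_iff_index_eq)
  moreover have "xs!i \<le> xs!j \<and> xs!j \<le> xs!i" if "ys!i = ys!j"
    using assms(1) ij that \<open>length xs = length ys\<close> unfolding order_iso_def by auto
  ultimately show "ys!i \<noteq> ys!j" by auto
qed

lemma order_iso_snoc:
  assumes "order_iso xs ys"
    and "\<forall>i<length xs. (xs!i \<le> x \<longleftrightarrow> ys!i \<le> y) \<and> (x \<le> xs!i \<longleftrightarrow> y \<le> ys!i)"
  shows "order_iso (xs @ [x]) (ys @ [y])"
  using assms unfolding order_iso_def by (auto simp: nth_append less_Suc_eq)

lemma length_std [simp]: "length (std xs) = length xs"
  by (simp add: std_def)

lemma nth_std: "i < length xs \<Longrightarrow> std xs ! i = card {y \<in> set xs. y \<le> xs!i}"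
  by (simp add: std_def)

lemma order_iso_std: "order_iso xs (std xs)"
proof -
  have mono: "std xs ! i \<le> std xs ! j" if "i < length xs" "j < length xs" "xs!i \<le> xs!j" for i j
  proof -
    have "{y\<in>set xs. y \<le> xs!i} \<subseteq> {y\<in>set xs. y \<le> xs!j}" using that(3) by auto
    hence "card {y\<in>set xs. y \<le> xs!i} \<le> card {y\<in>set xs. y \<le> xs!j}" by (rule card_mono[rotated]) simp
    thus ?thesis using that(1,2) by (simp add: nth_std)
  qed
  have strict: "std xs ! j < std xs ! i" if "i < length xs" "j < length xs" "xs!j < xs!i" for i j
  proof -
    have "{y\<in>set xs. y \<le> xs!j} \<subset> {y\<in>set xs. y \<le> xs!i}"
      using that by (auto simp: psubset_eq set_eq_iff intro!: exI[of _ "xs!i"])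
    thus ?thesis using that by (simp add: nth_std psubset_card_mono)
  qed
  show ?thesis unfolding order_iso_def
    using mono strict by (auto simp: not_le[symmetric])
qed

lemma std_eq_card_positions:
  assumes "distinct xs" "i < length xs"
  shows "std xs ! i = card {j. j < length xs \<and> xs!j \<le> xs!i}"
proof -
  have "{y \<in> set xs. y \<le> xs!i} = (nth xs) ` {j. j < length xs \<and> xs!j \<le> xs!i}"
    by (auto simp: in_set_conv_nth)
  moreover have "inj_on (nth xs) {j. j < length xs \<and> xs!j \<le> xs!i}"
    using assms(1) by (auto simp: inj_on_def nth_eq_iff_index_eq)
  ultimately show ?thesis using assms(2) by (simp add: nth_std card_image)
qed

lemma std_eq_if_order_iso:
  assumes "order_iso xs ys" "distinct xs"
  shows "std xs = std ys"
proof (rule nth_equalityI)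
  have length: "length xs = length ys" using assms(1) by (simp add: order_iso_def)
  thus "length (std xs) = length (std ys)" by simp
  fix i assume "i < length (std xs)"
  hence i: "i < length xs" by simp
  have "{j. j < length xs \<and> xs!j \<le> xs!i} = {j. j < length ys \<and> ys!j \<le> ys!i}"
    using assms(1) i length unfolding order_iso_def by auto
  thus "std xs ! i = std ys ! i"
    using std_eq_card_positions[OF assms(2) i] std_eq_card_positions[OF order_iso_distinct[OF assms]] i length
    by simp
qed

lemma order_iso_if_std_eq: "std xs = std ys \<Longrightarrow> order_iso xs ys"
  using order_iso_std[of xs] order_iso_sym[OF order_iso_std[of ys]] order_iso_trans by metis

lemma distinct_std: "distinct xs \<Longrightarrow> distinct (std xs)"
  using order_iso_distinct order_iso_std by blast

lemma std_drop_std: "distinct xs \<Longrightarrow> std (drop l (std xs)) = std (drop l xs)"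
  using std_eq_if_order_iso[OF order_iso_drop[OF order_iso_sym[OF order_iso_std[of xs]]]]
  by (simp add: distinct_std)

lemma std_take_std: "distinct xs \<Longrightarrow> std (take l (std xs)) = std (take l xs)"
  using std_eq_if_order_iso[OF order_iso_take[OF order_iso_sym[OF order_iso_std[of xs]]]]
  by (simp add: distinct_std)

lemma is_perm_std:
  assumes "distinct xs"
  shows "is_perm (std xs)"
proof -
  have "set (std xs) \<subseteq> {1..length xs}"
  proof
    fix y assume "y \<in> set (std xs)"
    then obtain i where i: "i < length xs" "y = card {z \<in> set xs. z \<le> xs!i}"
      by (auto simp: in_set_conv_nth nth_std)
    have "xs!i \<in> {z \<in> set xs. z \<le> xs!i}" using i by simp
    hence "0 < card {z \<in> set xs. z \<le> xs!i}" by (subst card_gt_0_iff) auto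
    moreover have "card {z \<in> set xs. z \<le> xs!i} \<le> card (set xs)" by (rule card_mono) auto
    ultimately show "y \<in> {1..length xs}" using i assms by (simp add: distinct_card)
  qed
  moreover have "card (set (std xs)) = card {1..length xs}"
    using distinct_std[OF assms] by (simp add: distinct_card)
  ultimately show ?thesis
    using distinct_std[OF assms] by (simp add: is_perm_def card_subset_eq)
qed

lemma colours_eq_if_order_iso:
  assumes "order_iso xs ys"
  shows "colours xs = colours ys"
proof -
  have length: "length xs = length ys" using assms by (simp add: order_iso_def)
  have "\<forall>i<p. i < length xs \<longrightarrow> colours xs ! i = colours ys ! i" for p
  proof (induction p)
    case (Suc p)
    have "colours xs ! p = colours ys ! p" if "p < length xs"
    proof -
      have "\<forall>j<p. xs!p < xs!j \<longleftrightarrow> ys!p < ys!j" using order_iso_less_iff[OF assms that] that by auto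
      thus ?thesis using Suc.IH that length nth_colours[OF that] nth_colours[of p ys]
        by (simp cong: conj_cong)
    qed
    thus ?case using Suc.IH less_Suc_eq by auto
  qed simp
  with length show ?thesis by (intro nth_equalityI) auto
qed

lemma colours_map_real: "colours (map real xs) = colours xs"
  by (rule colours_eq_if_order_iso[OF order_iso_sym[OF order_iso_map_real]])

section \<open>Avoiding a decreasing pattern bounds the colours\<close>

lemma nths_cong_length:
  "(\<And>i. i < length xs \<Longrightarrow> i \<in> A \<longleftrightarrow> i \<in> B) \<Longrightarrow> nths xs A = nths xs B"
  unfolding nths_def
  by (rule arg_cong[where f = "map fst"], rule filter_cong) (auto dest: set_zip_rightD)

lemma nths_atLeastLessThan_length: "nths xs {l..<length xs} = drop l xs"
  by (subst drop_eq_nths, rule nths_cong_length) auto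

lemma nths_insert_greatest:
  assumes "\<forall>i\<in>I. i < q" "q < length xs"
  shows "nths xs (insert q I) = nths xs I @ [xs!q]"
proof -
  have xs: "xs = take q xs @ [xs!q] @ drop (Suc q) xs"
    using assms(2) by (simp add: id_take_nth_drop)
  have "{j. j + Suc q \<in> insert q I} = {}" "{j. j + q \<in> I} = {}" using assms(1) by auto
  moreover have "nths (take q xs) (insert q I) = nths (take q xs) I"
    by (rule nths_cong_length) simp
  ultimately show ?thesis using assms(2)
    by (subst (1 2) xs) (simp add: nths_append nths_Cons min_absorb2)
qed

lemma std_eq_decr:
  assumes "sorted_wrt (>) xs" "length xs = c"
  shows "std xs = decr c"
proof (rule nth_equalityI)
  show "length (std xs) = length (decr c)" using assms by (simp add: decr_def)
  fix i assume "i < length (std xs)"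
  hence i: "i < c" using assms by simp
  have distinct: "distinct xs"
    using assms(1) by (metis distinct_conv_nth nat_neq_iff sorted_wrt_nth_less less_irrefl)
  have "xs!j \<le> xs!i \<longleftrightarrow> i \<le> j" if "j < c" for j
    using sorted_wrt_nth_less[OF assms(1), of i j] sorted_wrt_nth_less[OF assms(1), of j i] i that assms(2)
    by (cases "i < j"; cases "j < i") auto
  hence "{j. j < length xs \<and> xs!j \<le> xs!i} = {i..<c}" using assms(2) by auto
  hence "std xs ! i = c - i" using std_eq_card_positions[OF distinct] i assms(2) by simp
  moreover have "decr c ! i = c - i" using i by (simp add: decr_def rev_nth del: upt_Suc)
  ultimately show "std xs ! i = decr c ! i" by simp
qed

text \<open>An entry of colour c has an earlier larger entry of colour c - 1, so following these
  witnesses backwards yields a decreasing subsequence of length c ending at the entry.\<close>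

lemma decreasing_subseq_ending_at:
  "p < length \<tau> \<Longrightarrow> 1 \<le> c \<Longrightarrow> c \<le> colours \<tau> ! p \<Longrightarrow>
    \<exists>I. p \<in> I \<and> (\<forall>i\<in>I. i \<le> p) \<and> sorted_wrt (>) (nths \<tau> I) \<and> length (nths \<tau> I) = c
      \<and> (\<forall>y\<in>set (nths \<tau> I). \<tau>!p \<le> y)"
proof (induction c arbitrary: p)
  case (Suc c p)
  show ?case
  proof (cases "c = 0")
    case True
    with Suc.prems nths_insert_greatest[of "{}" p \<tau>] show ?thesis by (intro exI[of _ "{p}"]) auto
  next
    case False
    obtain j where j: "j < p" "\<tau>!p < \<tau>!j" "colours \<tau> ! j = c"
      using colours_props(3)[OF Suc.prems(1), of c] False Suc.prems by auto
    obtain I where I: "j \<in> I" "\<forall>i\<in>I. i \<le> j" "sorted_wrt (>) (nths \<tau> I)"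
        "length (nths \<tau> I) = c" "\<forall>y\<in>set (nths \<tau> I). \<tau>!j \<le> y"
      using Suc.IH[of j] j Suc.prems False by auto
    have snoc: "nths \<tau> (insert p I) = nths \<tau> I @ [\<tau>!p]"
      using nths_insert_greatest[of I p \<tau>] I(2) j(1) Suc.prems(1) by fastforce
    show ?thesis
    proof (intro exI[of _ "insert p I"] conjI)
      show "sorted_wrt (>) (nths \<tau> (insert p I))"
        unfolding snoc using I(3,5) j(2) by (auto simp: sorted_wrt_append)
    qed (use I snoc j in auto)
  qed
qed simp

lemma colours_less_if_avoids:
  assumes "\<not> contains_decr n \<tau>" "1 \<le> n" "c \<in> set (colours \<tau>)"
  shows "c < n"
proof (rule ccontr)
  assume "\<not> ?thesis"
  from assms(3) obtain p where p: "p < length \<tau>" "c = colours \<tau> ! p" by (auto simp: in_set_conv_nth)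
  with \<open>\<not> c < n\<close> obtain I where I: "\<forall>i\<in>I. i \<le> p" "sorted_wrt (>) (nths \<tau> I)" "length (nths \<tau> I) = n"
    using decreasing_subseq_ending_at[OF p(1) assms(2)] by force
  have "pat I \<tau> = decr n" unfolding pat_def using std_eq_decr I(2,3) .
  moreover have "I \<subseteq> {0..<length \<tau>}" using I(1) p(1) by auto
  ultimately show False using assms(1) unfolding contains_decr_def by blast
qed

lemma en_eq:
  "length cs = length xs \<Longrightarrow> en j (xs, cs) = (std (drop (length xs - j) xs), drop (length xs - j) cs)"
  using nths_atLeastLessThan_length[of cs] nths_atLeastLessThan_length[of xs]
  by (simp add: en_def pat_c_def)

lemma be_eq: "be j (xs, cs) = (std (take j xs), take j cs)"
  by (simp add: be_def pat_c_def atLeast0LessThan)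

lemma en_S:
  "is_perm \<sigma> \<Longrightarrow> en j (S \<sigma>) = (std (drop (length \<sigma> - j) \<sigma>), drop (length \<sigma> - j) (colours \<sigma>))"
  by (simp add: S_def ritmo_eq_colours en_eq)

lemma en_en_S:
  assumes "is_perm \<sigma>" "j \<le> k" "k \<le> length \<sigma>"
  shows "en j (en k (S \<sigma>)) = en j (S \<sigma>)"
proof -
  have "distinct (drop (length \<sigma> - k) \<sigma>)" using is_permD(1)[OF assms(1)] by simp
  with assms show ?thesis
    by (simp add: en_S en_eq std_drop_std add.commute[of "length \<sigma> - k"])
qed

lemma be_en_S:
  assumes "is_perm \<tau>"
  shows "be j (en k (S \<tau>)) =
    (std (take j (drop (length \<tau> - k) \<tau>)), take j (drop (length \<tau> - k) (colours \<tau>)))"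
  using is_permD(1)[OF assms] by (simp add: en_S[OF assms] be_eq std_take_std)

lemma drop_eq_take_snoc_last:
  assumes "1 \<le> k" "k \<le> length xs"
  shows "drop (length xs - k) xs = take (k - 1) (drop (length xs - k) xs) @ [xs ! (length xs - 1)]"
proof -
  have "drop (length xs - k) xs = take (Suc (k - 1)) (drop (length xs - k) xs)" using assms by simp
  also have "\<dots> = take (k - 1) (drop (length xs - k) xs) @ [drop (length xs - k) xs ! (k - 1)]"
    using assms by (intro take_Suc_conv_app_nth) simp
  finally show ?thesis using assms by simp
qed

section \<open>Inserting a new last entry\<close>

lemma of_nat_minus_half_less_iff: "real i - 1/2 < real s \<longleftrightarrow> i \<le> s"
  by (cases "i \<le> s") (auto simp: not_le dest!: of_nat_less_imp_less)

lemma less_of_nat_minus_half_iff: "real s < real i - 1/2 \<longleftrightarrow> s < i"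
  by (cases "s < i") (auto simp: not_less dest!: of_nat_less_imp_less)

definition star_colour :: "nat list \<Rightarrow> nat \<Rightarrow> nat" where
  "star_colour \<sigma> \<iota> = new_colour (map real \<sigma>) (colours \<sigma>) (real \<iota> - 1/2)"

lemma en_S_star:
  fixes \<iota> :: nat
  assumes perm: "is_perm \<sigma>"
  defines "x \<equiv> real \<iota> - 1/2"
  shows "en k (S (star \<sigma> \<iota>)) =
    (std (drop (length \<sigma> + 1 - k) (map real \<sigma> @ [x])),
     drop (length \<sigma> + 1 - k) (colours \<sigma> @ [star_colour \<sigma> \<iota>]))"
proof -
  let ?Y = "map real \<sigma> @ [x]"
  have "x \<noteq> real s" for s
    using of_nat_minus_half_less_iff[of \<iota> s] less_of_nat_minus_half_iff[of s \<iota>] unfolding x_def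
    by auto
  hence "x \<notin> set (map real \<sigma>)" by auto
  hence distinct: "distinct ?Y" using is_permD(1)[OF perm] by (simp add: distinct_map)
  have "ritmo (star \<sigma> \<iota>) = colours \<sigma> @ [star_colour \<sigma> \<iota>]"
    unfolding star_def star_colour_def x_def[symmetric]
    by (simp add: ritmo_eq_colours[OF is_perm_std[OF distinct]] colours_snoc colours_map_real
      colours_eq_if_order_iso[OF order_iso_sym[OF order_iso_std]])
  thus ?thesis
    unfolding S_def star_def x_def[symmetric]
    by (simp add: en_eq std_drop_std[OF distinct])
qed

lemma star_colour_props:
  shows "1 \<le> star_colour \<sigma> \<iota>"
    "\<And>c. 1 \<le> c \<Longrightarrow> c < star_colour \<sigma> \<iota> \<Longrightarrow> \<exists>j<length \<sigma>. \<iota> \<le> \<sigma>!j \<and> colours \<sigma>!j = c"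
    "\<And>j. j < length \<sigma> \<Longrightarrow> \<iota> \<le> \<sigma>!j \<Longrightarrow> colours \<sigma>!j < star_colour \<sigma> \<iota>"
proof -
  let ?xs = "map real \<sigma>" and ?x = "real \<iota> - 1/2"
  show "1 \<le> star_colour \<sigma> \<iota>"
    using new_colour_props(1)[where xs = ?xs] unfolding star_colour_def colours_map_real .
  show "\<exists>j<length \<sigma>. \<iota> \<le> \<sigma>!j \<and> colours \<sigma>!j = c" if "1 \<le> c" "c < star_colour \<sigma> \<iota>" for c
  proof -
    from that obtain j where "j < length \<sigma>" "?x < ?xs!j" "colours \<sigma>!j = c"
      using new_colour_props(3)[where xs = ?xs and x = ?x] unfolding star_colour_def colours_map_real
      by fastforce
    thus ?thesis by (auto simp: of_nat_minus_half_less_iff)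
  qed
  show "colours \<sigma>!j < star_colour \<sigma> \<iota>" if "j < length \<sigma>" "\<iota> \<le> \<sigma>!j" for j
    using colours_less_new_colour[where xs = ?xs and x = ?x and j = j] that
    unfolding star_colour_def colours_map_real by (simp add: of_nat_minus_half_less_iff)
qed

lemma star_colour_le_Suc:
  assumes "is_perm \<sigma>" "1 \<le> i" "i \<le> length \<sigma>"
  shows "star_colour \<sigma> i \<le> star_colour \<sigma> (Suc i) + 1"
proof -
  obtain p where p: "p < length \<sigma>" "\<sigma>!p = i" using is_permD(3)[OF assms(1)] assms(2,3) by blast
  have "j = p \<or> real (Suc i) - 1/2 < real (\<sigma>!j)" if "j < length \<sigma>" "real i - 1/2 < real (\<sigma>!j)" for j
  proof (cases "\<sigma>!j = i")
    case True
    with p that(1) is_permD(1)[OF assms(1)] show ?thesis by (metis nth_eq_iff_index_eq)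
  next
    case False
    with that(2) show ?thesis unfolding of_nat_minus_half_less_iff by simp
  qed
  thus ?thesis
    using new_colour_le_Suc_new_colour[of "map real \<sigma>" "real i - 1/2" p "real (Suc i) - 1/2"]
    unfolding star_colour_def colours_map_real by simp
qed

lemma discrete_intermediate_value:
  fixes g :: "nat \<Rightarrow> nat"
  assumes "lo \<le> hi" "g hi \<le> d" "d \<le> g lo" "\<forall>i. lo \<le> i \<longrightarrow> i < hi \<longrightarrow> g i \<le> g (Suc i) + 1"
  shows "\<exists>i\<in>{lo..hi}. g i = d"
  using assms
proof (induction hi)
  case (Suc h)
  show ?case
  proof (cases "g (Suc h) = d")
    case False
    with Suc.prems have "g (Suc h) < d" "lo \<le> h" by (auto simp: le_Suc_eq)
    with Suc.prems(4) have "g h \<le> d" by fastforce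
    with Suc.IH \<open>lo \<le> h\<close> Suc.prems show ?thesis by fastforce
  qed (use Suc.prems in auto)
qed auto

section \<open>Extending along an edge of the coloured overlap graph\<close>

locale overlapping_windows =
  fixes \<sigma> \<tau> :: "nat list" and k :: nat
  assumes perm_\<sigma>: "is_perm \<sigma>" and perm_\<tau>: "is_perm \<tau>"
    and k_pos: "1 \<le> k" and k_le_\<sigma>: "k \<le> length \<sigma>" and k_le_\<tau>: "k \<le> length \<tau>"
    and overlap: "en (k - 1) (S \<sigma>) = be (k - 1) (en k (S \<tau>))"
    and colours_available: "{1..<last (colours \<tau>)} \<subseteq> set (colours \<sigma>)"
begin

text \<open>The last \<open>k - 1\<close> entries of \<open>\<sigma>\<close> start at \<open>ws\<close> and mirror the \<open>k - 1\<close> entries of \<open>\<tau>\<close>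
  starting at \<open>wt\<close>; the entry of \<open>\<tau>\<close> at \<open>lt\<close> is the one to be imitated by the inserted value.\<close>

abbreviation "ws \<equiv> length \<sigma> + 1 - k"
abbreviation "wt \<equiv> length \<tau> - k"
abbreviation "lt \<equiv> length \<tau> - 1"

lemma window_positions: "i < k - 1 \<Longrightarrow> ws + i < length \<sigma> \<and> wt + i < lt"
  using k_pos k_le_\<sigma> k_le_\<tau> by auto

lemma window_std: "std (drop ws \<sigma>) = std (take (k - 1) (drop wt \<tau>))"
  and window_colours: "drop ws (colours \<sigma>) = take (k - 1) (drop wt (colours \<tau>))"
  using overlap k_pos by (simp_all add: en_S[OF perm_\<sigma>] be_en_S[OF perm_\<tau>])

lemma window_less_iff:
  assumes "i < k - 1" "j < k - 1"
  shows "\<sigma>!(ws + i) < \<sigma>!(ws + j) \<longleftrightarrow> \<tau>!(wt + i) < \<tau>!(wt + j)"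
  using order_iso_less_iff[OF order_iso_if_std_eq[OF window_std], of i j] assms k_le_\<sigma> k_le_\<tau>
  by simp

lemma window_colour: "i < k - 1 \<Longrightarrow> colours \<sigma>!(ws + i) = colours \<tau>!(wt + i)"
  using arg_cong[OF window_colours, of "\<lambda>cs. cs ! i"] k_le_\<sigma> k_le_\<tau> by simp

lemma window_ne_last: "i < k - 1 \<Longrightarrow> \<tau>!(wt + i) \<noteq> \<tau>!lt"
  using window_positions is_permD(1)[OF perm_\<tau>] k_pos k_le_\<tau>
  by (simp add: nth_eq_iff_index_eq)

lemma last_colour_props:
  shows "1 \<le> colours \<tau>!lt"
    "\<And>z. z < lt \<Longrightarrow> \<tau>!lt < \<tau>!z \<Longrightarrow> colours \<tau>!z < colours \<tau>!lt"
    "\<And>c. 1 \<le> c \<Longrightarrow> c < colours \<tau>!lt \<Longrightarrow> \<exists>z<lt. \<tau>!lt < \<tau>!z \<and> colours \<tau>!z = c"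
  using colours_props(1,3)[of lt \<tau>] colours_less_colours[of _ lt \<tau>] k_pos k_le_\<tau> by auto

text \<open>Admissible insertion values lie in \<open>{Suc lo..hi}\<close>: above every window entry that must stay
  below the new last entry, and at most every window entry that must stay above it.\<close>

definition lo :: nat where
  "lo = Max (insert 0 ((\<lambda>i. \<sigma>!(ws + i)) ` {i. i < k - 1 \<and> \<tau>!(wt + i) < \<tau>!lt}))"

definition hi :: nat where
  "hi = Min (insert (length \<sigma> + 1) ((\<lambda>i. \<sigma>!(ws + i)) ` {i. i < k - 1 \<and> \<tau>!lt < \<tau>!(wt + i)}))"

lemma window_le_lo: "i < k - 1 \<Longrightarrow> \<tau>!(wt + i) < \<tau>!lt \<Longrightarrow> \<sigma>!(ws + i) \<le> lo"
  unfolding lo_def by (intro Max_ge) auto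

lemma hi_le_window: "i < k - 1 \<Longrightarrow> \<tau>!lt < \<tau>!(wt + i) \<Longrightarrow> hi \<le> \<sigma>!(ws + i)"
  unfolding hi_def by (intro Min_le) auto

lemma hi_le: "hi \<le> length \<sigma> + 1"
  unfolding hi_def by (intro Min_le) auto

lemma lo_cases: "lo = 0 \<or> (\<exists>i<k - 1. \<tau>!(wt + i) < \<tau>!lt \<and> lo = \<sigma>!(ws + i))"
proof -
  have "lo \<in> insert 0 ((\<lambda>i. \<sigma>!(ws + i)) ` {i. i < k - 1 \<and> \<tau>!(wt + i) < \<tau>!lt})"
    unfolding lo_def by (intro Max_in) auto
  thus ?thesis by auto
qed

lemma hi_cases: "hi = length \<sigma> + 1 \<or> (\<exists>i<k - 1. \<tau>!lt < \<tau>!(wt + i) \<and> hi = \<sigma>!(ws + i))"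
proof -
  have "hi \<in> insert (length \<sigma> + 1) ((\<lambda>i. \<sigma>!(ws + i)) ` {i. i < k - 1 \<and> \<tau>!lt < \<tau>!(wt + i)})"
    unfolding hi_def by (intro Min_in) auto
  thus ?thesis by auto
qed

lemma lo_less_hi: "lo < hi"
proof -
  note bounds = is_permD(2)[OF perm_\<sigma>]
  from lo_cases show ?thesis
  proof
    assume "lo = 0"
    with hi_cases show ?thesis using bounds window_positions by fastforce
  next
    assume "\<exists>i<k - 1. \<tau>!(wt + i) < \<tau>!lt \<and> lo = \<sigma>!(ws + i)"
    then obtain i where i: "i < k - 1" "\<tau>!(wt + i) < \<tau>!lt" "lo = \<sigma>!(ws + i)" by blast
    from hi_cases show ?thesis
    proof
      assume "hi = length \<sigma> + 1"
      with i bounds window_positions show ?thesis by fastforce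
    next
      assume "\<exists>j<k - 1. \<tau>!lt < \<tau>!(wt + j) \<and> hi = \<sigma>!(ws + j)"
      then obtain j where "j < k - 1" "\<tau>!lt < \<tau>!(wt + j)" "hi = \<sigma>!(ws + j)" by blast
      with i window_less_iff[of i j] show ?thesis by simp
    qed
  qed
qed

text \<open>An entry \<open>\<ge> hi\<close> of colour d cannot lie in the window, where it would clash with the colouring
  of \<open>\<tau>\<close>, nor before the window entry \<open>hi\<close>, whose colour is already below d.\<close>

lemma star_colour_hi_le: "star_colour \<sigma> hi \<le> colours \<tau>!lt"
proof (rule ccontr)
  assume "\<not> ?thesis"
  then obtain j where j: "j < length \<sigma>" "hi \<le> \<sigma>!j" "colours \<sigma>!j = colours \<tau>!lt"
    using star_colour_props(2)[where \<sigma> = \<sigma> and \<iota> = hi] last_colour_props(1) by (meson not_le)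
  from hi_cases show False
  proof
    assume "hi = length \<sigma> + 1"
    with j is_permD(2)[OF perm_\<sigma>] show False by fastforce
  next
    assume "\<exists>i<k - 1. \<tau>!lt < \<tau>!(wt + i) \<and> hi = \<sigma>!(ws + i)"
    then obtain i where i: "i < k - 1" "\<tau>!lt < \<tau>!(wt + i)" "hi = \<sigma>!(ws + i)" by blast
    show False
    proof (cases "ws \<le> j")
      case True
      define i' where "i' = j - ws"
      have i': "i' < k - 1" "j = ws + i'" using True j(1) k_le_\<sigma> unfolding i'_def by auto
      have colour: "colours \<tau>!(wt + i') = colours \<tau>!lt" using window_colour[OF i'(1)] j(3) i'(2) by simp
      consider "\<tau>!(wt + i') < \<tau>!lt" | "\<tau>!lt < \<tau>!(wt + i')"
        using window_ne_last[OF i'(1)] by linarith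
      thus False
      proof cases
        case 1
        with window_le_lo[OF i'(1)] lo_less_hi j(2) i'(2) show False by simp
      next
        case 2
        with last_colour_props(2)[of "wt + i'"] window_positions[OF i'(1)] colour show False by simp
      qed
    next
      case False
      hence "j < ws + i" by simp
      moreover have "\<sigma>!j \<noteq> \<sigma>!(ws + i)"
        using calculation j(1) window_positions[OF i(1)] is_permD(1)[OF perm_\<sigma>]
        by (simp add: nth_eq_iff_index_eq)
      with j(2) i(3) have "\<sigma>!(ws + i) < \<sigma>!j" by simp
      ultimately have "colours \<sigma>!j < colours \<tau>!(wt + i)"
        using colours_less_colours[of j "ws + i" \<sigma>] window_positions[OF i(1)] window_colour[OF i(1)] by simp
      with j(3) last_colour_props(2)[of "wt + i"] i(2) window_positions[OF i(1)] show False by simp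
    qed
  qed
qed

text \<open>When no window entry is forced below the new entry (\<open>lo = 0\<close>), this is where
  \<open>colours_available\<close> is needed.\<close>

lemma previous_colour_above_lo:
  assumes "2 \<le> colours \<tau>!lt"
  shows "\<exists>j<length \<sigma>. lo < \<sigma>!j \<and> colours \<sigma>!j = colours \<tau>!lt - 1"
proof -
  have pred: "1 \<le> colours \<tau>!lt - 1" "colours \<tau>!lt - 1 < colours \<tau>!lt" using assms by auto
  then obtain z where z: "z < lt" "\<tau>!lt < \<tau>!z" "colours \<tau>!z = colours \<tau>!lt - 1"
    using last_colour_props(3) by blast
  from lo_cases show ?thesis
  proof
    assume "lo = 0"
    have "colours \<tau> \<noteq> []"
      using k_pos k_le_\<tau> length_colours[of \<tau>] by (auto simp del: length_colours)
    hence "last (colours \<tau>) = colours \<tau>!lt" by (simp add: last_conv_nth)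
    with assms colours_available have "colours \<tau>!lt - 1 \<in> set (colours \<sigma>)" by auto
    with \<open>lo = 0\<close> is_permD(2)[OF perm_\<sigma>] show ?thesis by (fastforce simp: in_set_conv_nth)
  next
    assume "\<exists>i<k - 1. \<tau>!(wt + i) < \<tau>!lt \<and> lo = \<sigma>!(ws + i)"
    then obtain i where i: "i < k - 1" "\<tau>!(wt + i) < \<tau>!lt" "lo = \<sigma>!(ws + i)" by blast
    show ?thesis
    proof (cases "wt \<le> z")
      case True
      define i' where "i' = z - wt"
      have i': "i' < k - 1" "z = wt + i'" using True z(1) k_pos k_le_\<tau> unfolding i'_def by auto
      with z hi_le_window[OF i'(1)] lo_less_hi window_colour[OF i'(1)] window_positions[OF i'(1)]
      show ?thesis by (intro exI[of _ "ws + i'"]) auto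
    next
      case False
      hence "z < wt + i" by arith
      with z i window_positions[OF i(1)] have "colours \<tau>!z < colours \<tau>!(wt + i)"
        by (intro colours_less_colours) (auto, arith)
      with z(3) window_colour[OF i(1)] have "colours \<tau>!lt - 1 < colours \<sigma>!(ws + i)" by simp
      with colours_props(3)[of "ws + i" \<sigma>, OF _ pred(1)] window_positions[OF i(1)]
      obtain j where "j < ws + i" "\<sigma>!(ws + i) < \<sigma>!j" "colours \<sigma>!j = colours \<tau>!lt - 1"
        by auto
      with i(3) window_positions[OF i(1)] show ?thesis by (intro exI[of _ j]) auto
    qed
  qed
qed

lemma le_star_colour_Suc_lo: "colours \<tau>!lt \<le> star_colour \<sigma> (Suc lo)"
proof (cases "colours \<tau>!lt \<le> 1")
  case True
  with star_colour_props(1)[of \<sigma> "Suc lo"] show ?thesis by linarith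
next
  case False
  then obtain j where "j < length \<sigma>" "lo < \<sigma>!j" "colours \<sigma>!j = colours \<tau>!lt - 1"
    using previous_colour_above_lo by auto
  with star_colour_props(3)[of j \<sigma> "Suc lo"] show ?thesis by simp
qed


lemma order_iso_star_window:
  assumes "lo < \<iota>" "\<iota> \<le> hi"
  shows "order_iso (map real (drop ws \<sigma>) @ [real \<iota> - 1/2]) (drop wt \<tau>)"
proof -
  have "order_iso (map real (drop ws \<sigma>)) (take (k - 1) (drop wt \<tau>))"
    using order_iso_trans[OF order_iso_sym[OF order_iso_map_real] order_iso_if_std_eq[OF window_std]] .
  moreover have "(real (\<sigma>!(ws + i)) \<le> real \<iota> - 1/2 \<longleftrightarrow> \<tau>!(wt + i) \<le> \<tau>!lt) \<and>
      (real \<iota> - 1/2 \<le> real (\<sigma>!(ws + i)) \<longleftrightarrow> \<tau>!lt \<le> \<tau>!(wt + i))" if i: "i < k - 1" for i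
  proof (cases "\<tau>!(wt + i) < \<tau>!lt")
    case True
    with window_le_lo[OF i] assms(1) have "real (\<sigma>!(ws + i)) < real \<iota> - 1/2"
      unfolding less_of_nat_minus_half_iff by simp
    with True show ?thesis by auto
  next
    case False
    with window_ne_last[OF i] have "\<tau>!lt < \<tau>!(wt + i)" by simp
    with hi_le_window[OF i] assms(2) have "real \<iota> - 1/2 < real (\<sigma>!(ws + i))"
      unfolding of_nat_minus_half_less_iff by simp
    with \<open>\<tau>!lt < \<tau>!(wt + i)\<close> show ?thesis by auto
  qed
  ultimately have "order_iso (map real (drop ws \<sigma>) @ [real \<iota> - 1/2]) (take (k - 1) (drop wt \<tau>) @ [\<tau>!lt])"
    using k_le_\<sigma> k_le_\<tau> by (intro order_iso_snoc) auto
  thus ?thesis using drop_eq_take_snoc_last[OF k_pos k_le_\<tau>] by simp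
qed

theorem exists_star_en_S_eq: "\<exists>\<iota>\<in>{1..length \<sigma> + 1}. en k (S (star \<sigma> \<iota>)) = en k (S \<tau>)"
proof -
  have "\<forall>i. Suc lo \<le> i \<longrightarrow> i < hi \<longrightarrow> star_colour \<sigma> i \<le> star_colour \<sigma> (Suc i) + 1"
    using star_colour_le_Suc[OF perm_\<sigma>] hi_le by simp
  with discrete_intermediate_value[where g = "star_colour \<sigma>", OF _ star_colour_hi_le le_star_colour_Suc_lo] lo_less_hi
  obtain \<iota> where \<iota>: "\<iota> \<in> {Suc lo..hi}" "star_colour \<sigma> \<iota> = colours \<tau>!lt"
    by (meson Suc_leI)
  hence \<iota>_bounds: "lo < \<iota>" "\<iota> \<le> hi" by auto
  have "std (map real (drop ws \<sigma>) @ [real \<iota> - 1/2]) = std (drop wt \<tau>)"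
    using std_eq_if_order_iso[OF order_iso_sym[OF order_iso_star_window[OF \<iota>_bounds]]]
      is_permD(1)[OF perm_\<tau>] by simp
  moreover have "drop ws (colours \<sigma>) @ [star_colour \<sigma> \<iota>] = drop wt (colours \<tau>)"
    using drop_eq_take_snoc_last[of k "colours \<tau>"] k_pos k_le_\<tau> window_colours \<iota>(2) by simp
  ultimately have "en k (S (star \<sigma> \<iota>)) = en k (S \<tau>)"
    using k_pos k_le_\<sigma> by (simp add: en_S_star[OF perm_\<sigma>] en_S[OF perm_\<tau>] drop_map)
  moreover have "\<iota> \<in> {1..length \<sigma> + 1}" using \<iota>_bounds hi_le by simp
  ultimately show ?thesis by blast
qed

end

theorem mainTheorem12:
  fixes n k :: nat and \<sigma> \<pi> c \<pi>' c' :: "nat list"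
  assumes "n \<ge> 2" and "k \<ge> 1"
    and "\<sigma> \<in> Av n" and "length \<sigma> \<ge> k"
    and "set (ritmo \<sigma>) = {1..n-1}"
    and "(\<pi>, c) = en k (S \<sigma>)"
    and "(\<pi>', c') \<in> ovc_edges k n"
    and "ovc_start k (\<pi>', c') = ovc_arrival k (\<pi>, c)"
  shows "\<exists>\<iota>\<in>{1..length \<sigma> + 1}. en k (S (star \<sigma> \<iota>)) = (\<pi>', c')"
proof -
  from assms(7) obtain \<tau> where \<tau>: "\<tau> \<in> Av n" "k \<le> length \<tau>" "en k (S \<tau>) = (\<pi>', c')"
    unfolding ovc_edges_def inherited_def by auto
  have perm_\<sigma>: "is_perm \<sigma>" using assms(3) by (auto simp: Av_def Av_m_def)
  have perm_\<tau>: "is_perm \<tau>" and avoids: "\<not> contains_decr n \<tau>"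
    using \<tau>(1) by (auto simp: Av_def Av_m_def)
  have "en (k - 1) (S \<sigma>) = be (k - 1) (en k (S \<tau>))"
    using assms(4,6,8) \<tau>(3) en_en_S[OF perm_\<sigma>, of "k - 1" k]
    unfolding ovc_start_def ovc_arrival_def by simp
  moreover have "{1..<last (colours \<tau>)} \<subseteq> set (colours \<sigma>)"
  proof -
    have "colours \<tau> \<noteq> []"
      using assms(2) \<tau>(2) length_colours[of \<tau>] by (auto simp del: length_colours)
    hence "last (colours \<tau>) < n" using colours_less_if_avoids[OF avoids] assms(1) by simp
    hence "{1..<last (colours \<tau>)} \<subseteq> {1..n - 1}" by auto
    thus ?thesis using assms(5) ritmo_eq_colours[OF perm_\<sigma>] by simp
  qed
  ultimately interpret overlapping_windows \<sigma> \<tau> k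
    using perm_\<sigma> perm_\<tau> assms(2,4) \<tau>(2) by unfold_locales auto
  from exists_star_en_S_eq \<tau>(3) show ?thesis by simp
qed

end
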